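(* Let $d \geq 2$ and $r \geq 4$ be integers, $\delta_0 \in (0,1)$, $1 \le m \le d-1$ an integer, and $p(x) \in \mathbb{Z}[i][x]$ a polynomial of degree $d-m+1$. Let $N, N_m$ be positive integers with $N \ge N_m$. Let $A \subseteq [N]$ have density $\delta \ge \delta_0$ and let $D$ be a nonempty subset of $[2N^{1/(2d)}]$. Assume the balanced function $f$ of $A$ satisfies \[ \Big| \mathbb{E}_{n\in[N]}\mathbb{E}_{x\in D}\mathbb{E}_{\mathbf{h}\in [N^{1/(8d^r)}]^{d-m}} f(n) f\big(n + p(\sigma_{d-m}(x,\mathbf{h}))\big)\Big| \ge \frac{\delta^{2^{m-1}+1}}{2^{3\cdot 2^{m-1}-2}}. \] Define \[ N_{m+1} = \max\left\{ N_m,\ \left\lceil \left(\frac{2^{3\cdot 2^m - 1}}{\delta_0^{2^m+1}}\right)^{4d^r}\right\rceil,\ \left\lceil\left(\frac{2^{3\cdot 2^m}(2d+2)^{2d+2} M_p^2}{\delta_0^{2^m+1}}\right)^2\right\rceil\right\}. \] If $N \ge N_{m+1}$, then there exists a polynomial $p'(x) \in \mathbb{Z}[i][x]$ of degree $d-m$ with $0 < M_{p'} \le 2^{2d+1} M_p N^{1/(8d^{r-1})}$ such that \[ \Big| \mathbb{E}_{n\in[N]}\mathbb{E}_{x\in D}\mathbb{E}_{\mathbf{h}\in [N^{1/(8d^r)}]^{d-m-1}} f(n) f\big(n + p'(\sigma_{d-m-1}(x,\mathbf{h}))\big)\Big| \ge \frac{\delta^{2^{m}+1}}{2^{3\cdot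 2^{m}-2}}. \]
   Context: For a real number $X\ge 1$, $[X] := \{a+bi \in \mathbb{Z}[i] : a,b \in \mathbb{Z},\ 1 \le a,b \le X\}$; $[X]^j$ is its $j$-fold Cartesian product (for $j=0$ a single empty tuple). For a finite nonempty set $S$, $\mathbb{E}_{x\in S} g(x) := |S|^{-1}\sum_{x\in S} g(x)$. A subset $A\subseteq[N]$ has density $\delta=|A|/N^2$, and its balanced function is $f(n) = \mathbf{1}_A(n) - \delta\mathbf{1}_{[N]}(n)$ for $n\in\mathbb{Z}[i]$. For $x \in \mathbb{Z}[i]$ and $\mathbf{h} = (h_1,\dots,h_j)$, $\sigma_j(x,\mathbf{h}) := x + h_1 + \dots + h_j$. For $p(x) = a_d x^d + \dots + a_0 \in \mathbb{C}[x]$ with $a_d\neq 0$, $M_p := 2\max\{|a_0|,\dots,|a_d|\}$. *)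

theory Defs
  imports "HOL-Analysis.Analysis" "HOL-Computational_Algebra.Polynomial"
begin

text \<open>Gaussian integers are represented as complex numbers with integer real and imaginary parts.\<close>
definition gauss_int :: "complex \<Rightarrow> bool" where
  "gauss_int z \<longleftrightarrow> Re z \<in> \<int> \<and> Im z \<in> \<int>"

definition gauss_poly :: "complex poly \<Rightarrow> bool" where
  "gauss_poly p \<longleftrightarrow> (\<forall>i. gauss_int (coeff p i))"

definition gbox :: "real \<Rightarrow> complex set" where
  "gbox X = {z. \<exists>a b :: int. z = Complex (of_int a) (of_int b) \<and>
                  1 \<le> a \<and> real_of_int a \<le> X \<and> 1 \<le> b \<and> real_of_int b \<le> X}"

definition gtuples :: "nat \<Rightarrow> real \<Rightarrow> complex list set" where
  "gtuples j X = {hs. length hs = j \<and> set hs \<subseteq> gbox X}"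

definition sigma :: "complex \<Rightarrow> complex list \<Rightarrow> complex" where
  "sigma x hs = x + sum_list hs"

definition avg :: "'a set \<Rightarrow> ('a \<Rightarrow> real) \<Rightarrow> real" where
  "avg S g = (\<Sum>x\<in>S. g x) / real (card S)"

definition Mp :: "complex poly \<Rightarrow> real" where
  "Mp p = 2 * Max ((\<lambda>i. norm (coeff p i)) ` {..degree p})"

definition density :: "complex set \<Rightarrow> nat \<Rightarrow> real" where
  "density A N = real (card A) / (real N)^2"

definition balanced :: "complex set \<Rightarrow> nat \<Rightarrow> complex \<Rightarrow> real" where
  "balanced A N n = indicator A n - density A N * indicator (gbox (real N)) n"

end

theory Submission
  imports Defs
begin

(* Split the last shift off the tuple: the correlation becomes an average over n in [N],
   u = (x, h_1, ..., h_(j-1)) and h in [H] of f(n) f(n + P(u, h)), where P(u, h) = p(sigma(x, u) + h).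
   Cauchy-Schwarz in (n, u), with the mean of f^2 at most delta, bounds its square by delta times
   the average over pairs (h, k) of the correlation of f(n + P(u, h)) with f(n + P(u, k)).
   Since f is bounded and supported on [N], translating n by P(u, h) changes such an average by at
   most 2 |P(u, h)| / N, and turns it into the correlation of f with its shift by p(y + k) - p(y + h),
   a polynomial of degree one less whose coefficients the binomial theorem controls.  The diagonal
   h = k contributes at most 1 / |[H]|, so some pair h <> k does at least as well as the
   off-diagonal average; the lower bound on N makes the translation error and the diagonal
   negligible. *)

section \<open>Averages\<close>

lemma avg_mono: "(\<And>x. x \<in> A \<Longrightarrow> f x \<le> g x) \<Longrightarrow> avg A f \<le> avg A g"
  unfolding avg_def by (intro divide_right_mono sum_mono) auto

lemma avg_const: "finite A \<Longrightarrow> A \<noteq> {} \<Longrightarrow> avg A (\<lambda>_. c) = c"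
  by (simp add: avg_def)

lemma avg_le_const: "finite A \<Longrightarrow> A \<noteq> {} \<Longrightarrow> (\<And>x. x \<in> A \<Longrightarrow> f x \<le> c) \<Longrightarrow> avg A f \<le> c"
  using avg_mono[of A f "\<lambda>_. c"] by (simp add: avg_const)

lemma avg_nonneg: "(\<And>x. x \<in> A \<Longrightarrow> 0 \<le> f x) \<Longrightarrow> 0 \<le> avg A f"
  unfolding avg_def by (intro divide_nonneg_nonneg sum_nonneg) auto

lemma avg_add_const: "finite A \<Longrightarrow> A \<noteq> {} \<Longrightarrow> avg A (\<lambda>x. f x + c) = avg A f + c"
  by (simp add: avg_def sum.distrib add_divide_distrib)

lemma avg_mult_left: "avg A (\<lambda>x. c * f x) = c * avg A f"
  by (simp add: avg_def sum_distrib_left)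

lemma avg_reindex: "inj_on g A \<Longrightarrow> avg (g ` A) F = avg A (\<lambda>x. F (g x))"
  by (simp add: avg_def sum.reindex card_image)

lemma avg_swap: "avg A (\<lambda>x. avg B (\<lambda>y. g x y)) = avg B (\<lambda>y. avg A (\<lambda>x. g x y))"
  unfolding avg_def by (simp add: sum_divide_distrib[symmetric] sum.swap[of _ A B] field_simps)

lemma avg_swap3: "avg A (\<lambda>x. avg B (\<lambda>y. avg C (\<lambda>z. g x y z))) = avg B (\<lambda>y. avg C (\<lambda>z. avg A (\<lambda>x. g x y z)))"
  by (subst avg_swap) (rule arg_cong[where f="avg B"], rule ext, rule avg_swap)

lemma avg_product: "avg A f * avg B g = avg A (\<lambda>x. avg B (\<lambda>y. f x * g y))"
  unfolding avg_def by (simp add: sum_product sum_divide_distrib[symmetric] field_simps)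

lemma avg_cartesian: "avg (A \<times> B) (\<lambda>(x, y). g x y) = avg A (\<lambda>x. avg B (g x))"
  unfolding avg_def
  by (simp add: sum.cartesian_product[symmetric] card_cartesian_product sum_divide_distrib[symmetric] field_simps)

lemma avg_Cauchy_Schwarz: "(avg A (\<lambda>x. f x * g x))\<^sup>2 \<le> avg A (\<lambda>x. (f x)\<^sup>2) * avg A (\<lambda>x. (g x)\<^sup>2)"
  unfolding avg_def using Cauchy_Schwarz_ineq_sum[of f g A]
  by (simp add: power_divide power2_eq_square divide_right_mono)

section \<open>Van der Corput differencing\<close>

lemma avg_correlation_Cauchy_Schwarz:
  fixes f :: "'a \<Rightarrow> real" and g :: "'a \<Rightarrow> 'u \<Rightarrow> 'b \<Rightarrow> real"
    and X :: "'a set" and U :: "'u set" and B :: "'b set"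
  assumes "finite U" "U \<noteq> {}"
  defines "S \<equiv> avg B (\<lambda>h. avg B (\<lambda>k. avg X (\<lambda>n. avg U (\<lambda>u. g n u h * g n u k))))"
  shows "(avg X (\<lambda>n. avg U (\<lambda>u. avg B (\<lambda>h. f n * g n u h))))\<^sup>2 \<le> avg X (\<lambda>n. (f n)\<^sup>2) * S"
    and "0 \<le> S"
proof -
  define G where "G n u = avg B (g n u)" for n u
  have "avg X (\<lambda>n. avg U (\<lambda>u. avg B (\<lambda>h. f n * g n u h))) = avg (X \<times> U) (\<lambda>(n, u). f n * G n u)"
    by (simp add: avg_cartesian G_def avg_mult_left)
  moreover have "avg (X \<times> U) (\<lambda>(n, u). (f n)\<^sup>2) = avg X (\<lambda>n. (f n)\<^sup>2)"
    using assms by (simp add: avg_cartesian avg_const)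
  moreover have "avg (X \<times> U) (\<lambda>(n, u). (G n u)\<^sup>2)
      = avg X (\<lambda>n. avg U (\<lambda>u. avg B (\<lambda>h. avg B (\<lambda>k. g n u h * g n u k))))"
    by (simp add: avg_cartesian G_def power2_eq_square avg_product)
  moreover have "\<dots> = S"
    unfolding S_def by (simp only: avg_swap3[of U B B] avg_swap3[of X B B])
  ultimately show "(avg X (\<lambda>n. avg U (\<lambda>u. avg B (\<lambda>h. f n * g n u h))))\<^sup>2 \<le> avg X (\<lambda>n. (f n)\<^sup>2) * S"
    and "0 \<le> S"
    using avg_Cauchy_Schwarz[of "X \<times> U" "\<lambda>(n, u). f n" "\<lambda>(n, u). G n u"]
      avg_nonneg[of "X \<times> U" "\<lambda>(n, u). (G n u)\<^sup>2"]
    by (simp_all add: case_prod_unfold)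
qed

lemma exists_off_diagonal_ge:
  fixes T :: "'b \<Rightarrow> 'b \<Rightarrow> real"
  assumes "finite B" "B \<noteq> {}" "0 < w"
    and diag: "\<And>h. h \<in> B \<Longrightarrow> T h h \<le> c"
    and mean: "w + c / card B \<le> avg B (\<lambda>h. avg B (T h))"
  obtains h k where "h \<in> B" "k \<in> B" "h \<noteq> k" "w \<le> T h k"
proof -
  define n where "n = real (card B)"
  have card: "1 \<le> card B"
    using assms(1,2) by (simp add: Suc_leI card_gt_0_iff)
  then have n: "1 \<le> n"
    by (simp add: n_def)
  have "\<exists>h\<in>B. \<exists>k\<in>B. h \<noteq> k \<and> w \<le> T h k"
  proof (rule ccontr)
    assume "\<not> ?thesis"
    then have off: "T h k \<le> w" if "h \<in> B" "k \<in> B" "h \<noteq> k" for h k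
      using that by force
    have row: "avg B (T h) \<le> (c + (n - 1) * w) / n" if h: "h \<in> B" for h
    proof -
      have "sum (T h) B = T h h + sum (T h) (B - {h})"
        using sum.remove[OF assms(1) h] .
      also have "\<dots> \<le> c + (\<Sum>k\<in>B - {h}. w)"
        using diag[OF h] off[OF h] by (intro add_mono sum_mono) auto
      also have "\<dots> = c + (n - 1) * w"
        using assms(1) h card by (simp add: n_def)
      finally show ?thesis
        using n by (simp add: avg_def n_def divide_right_mono)
    qed
    have "avg B (\<lambda>h. avg B (T h)) \<le> (c + (n - 1) * w) / n"
      using assms(1,2) row by (rule avg_le_const)
    also have "\<dots> < w + c / n"
      using n \<open>0 < w\<close> by (simp add: field_simps)
    finally show False
      using mean by (simp add: n_def)
  qed
  then show ?thesis
    using that by blast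
qed

lemma van_der_Corput_differencing:
  fixes f :: "'a::ab_group_add \<Rightarrow> real" and P :: "'u \<Rightarrow> 'b \<Rightarrow> 'a"
  assumes fin: "finite X" "X \<noteq> {}" "finite U" "U \<noteq> {}" "finite B" "B \<noteq> {}"
    and f_bound: "\<And>z. \<bar>f z\<bar> \<le> 1"
    and energy: "avg X (\<lambda>n. (f n)\<^sup>2) \<le> \<delta>" and "0 < \<delta>"
    and shift: "\<And>u h k. u \<in> U \<Longrightarrow> h \<in> B \<Longrightarrow> k \<in> B \<Longrightarrow>
      avg X (\<lambda>n. f (n + P u h) * f (n + P u k)) \<le> avg X (\<lambda>n. f n * f (n + (P u k - P u h))) + e"
    and corr: "\<epsilon> \<le> \<bar>avg X (\<lambda>n. avg U (\<lambda>u. avg B (\<lambda>h. f n * f (n + P u h))))\<bar>" and "0 \<le> \<epsilon>"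
    and gain: "0 < \<epsilon>\<^sup>2 / \<delta> - e - 1 / card B"
  obtains h k where "h \<in> B" "k \<in> B" "h \<noteq> k"
    "\<epsilon>\<^sup>2 / \<delta> - e - 1 / card B \<le> avg X (\<lambda>n. avg U (\<lambda>u. f n * f (n + (P u k - P u h))))"
proof -
  define R where "R h k = avg X (\<lambda>n. avg U (\<lambda>u. f (n + P u h) * f (n + P u k)))" for h k
  define T where "T h k = avg X (\<lambda>n. avg U (\<lambda>u. f n * f (n + (P u k - P u h))))" for h k
  have CS: "(avg X (\<lambda>n. avg U (\<lambda>u. avg B (\<lambda>h. f n * f (n + P u h)))))\<^sup>2
      \<le> avg X (\<lambda>n. (f n)\<^sup>2) * avg B (\<lambda>h. avg B (R h))" "0 \<le> avg B (\<lambda>h. avg B (R h))"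
    unfolding R_def by (rule avg_correlation_Cauchy_Schwarz[OF fin(3,4)])+
  have "\<epsilon>\<^sup>2 \<le> (avg X (\<lambda>n. avg U (\<lambda>u. avg B (\<lambda>h. f n * f (n + P u h)))))\<^sup>2"
    using power_mono[OF corr \<open>0 \<le> \<epsilon>\<close>, of 2] by simp
  also have "\<dots> \<le> \<delta> * avg B (\<lambda>h. avg B (R h))"
    using CS mult_right_mono[OF energy CS(2)] by linarith
  finally have R_mean: "\<epsilon>\<^sup>2 / \<delta> \<le> avg B (\<lambda>h. avg B (R h))"
    using \<open>0 < \<delta>\<close> by (simp add: divide_le_eq mult.commute)
  have R_le: "R h k \<le> T h k + e" if "h \<in> B" "k \<in> B" for h k
  proof -
    have "R h k = avg U (\<lambda>u. avg X (\<lambda>n. f (n + P u h) * f (n + P u k)))"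
      unfolding R_def by (rule avg_swap)
    also have "\<dots> \<le> avg U (\<lambda>u. avg X (\<lambda>n. f n * f (n + (P u k - P u h))) + e)"
      using shift that by (intro avg_mono) auto
    also have "\<dots> = T h k + e"
      using fin unfolding T_def by (simp add: avg_add_const avg_swap[of X U])
    finally show ?thesis .
  qed
  have T_diag: "T h h \<le> 1" for h
  proof -
    have "f n * f n \<le> 1" for n
      using mult_le_one[OF f_bound[of n] abs_ge_zero f_bound[of n]] by simp
    then show ?thesis
      unfolding T_def using fin by (intro avg_le_const) auto
  qed
  have "avg B (\<lambda>h. avg B (R h)) \<le> avg B (\<lambda>h. avg B (\<lambda>k. T h k + e))"
    using R_le by (intro avg_mono) auto
  then have "(\<epsilon>\<^sup>2 / \<delta> - e - 1 / card B) + 1 / card B \<le> avg B (\<lambda>h. avg B (T h))"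
    using R_mean fin by (simp add: avg_add_const)
  then obtain h k where "h \<in> B" "k \<in> B" "h \<noteq> k" "\<epsilon>\<^sup>2 / \<delta> - e - 1 / card B \<le> T h k"
    using exists_off_diagonal_ge[OF fin(5,6) gain, of T 1] T_diag by blast
  then show ?thesis
    using that unfolding T_def by blast
qed

section \<open>Gaussian integers and boxes\<close>

lemma gauss_int_0 [intro]: "gauss_int 0"
  and gauss_int_1 [intro]: "gauss_int 1"
  and gauss_int_of_nat [intro]: "gauss_int (of_nat n)"
  by (auto simp: gauss_int_def)

lemma gauss_int_add [intro]: "gauss_int a \<Longrightarrow> gauss_int b \<Longrightarrow> gauss_int (a + b)"
  and gauss_int_diff [intro]: "gauss_int a \<Longrightarrow> gauss_int b \<Longrightarrow> gauss_int (a - b)"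
  and gauss_int_mult [intro]: "gauss_int a \<Longrightarrow> gauss_int b \<Longrightarrow> gauss_int (a * b)"
  by (auto simp: gauss_int_def)

lemma gauss_int_power [intro]: "gauss_int a \<Longrightarrow> gauss_int (a ^ n)"
  by (induction n) auto

lemma gauss_int_sum [intro]: "(\<And>i. i \<in> S \<Longrightarrow> gauss_int (g i)) \<Longrightarrow> gauss_int (\<Sum>i\<in>S. g i)"
  by (induction S rule: infinite_finite_induct) auto

lemma gauss_int_sum_list [intro]: "(\<And>z. z \<in> set zs \<Longrightarrow> gauss_int z) \<Longrightarrow> gauss_int (sum_list zs)"
  by (induction zs) auto

lemma gauss_int_poly [intro]: "gauss_poly p \<Longrightarrow> gauss_int z \<Longrightarrow> gauss_int (poly p z)"
  unfolding poly_altdef gauss_poly_def by auto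

lemma gauss_intE:
  assumes "gauss_int z"
  obtains a b :: int where "z = Complex (of_int a) (of_int b)"
  using assms unfolding gauss_int_def by (metis Ints_cases complex.exhaust_sel)

lemma gauss_int_norm_ge_1:
  assumes "gauss_int z" "z \<noteq> 0"
  shows "1 \<le> norm z"
proof -
  obtain a b :: int where z: "z = Complex (of_int a) (of_int b)"
    using gauss_intE[OF assms(1)] .
  then have "a \<noteq> 0 \<or> b \<noteq> 0"
    using assms(2) by (auto simp: complex_eq_iff)
  then have "1 \<le> \<bar>a\<bar> \<or> 1 \<le> \<bar>b\<bar>"
    by auto
  then show ?thesis
    using abs_Re_le_cmod[of z] abs_Im_le_cmod[of z] z by (auto simp flip: of_int_abs)
qed

lemma gbox_eq: "gbox X = (\<lambda>(a, b). Complex (of_int a) (of_int b)) ` ({1..\<lfloor>X\<rfloor>} \<times> {1..\<lfloor>X\<rfloor>})"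
  unfolding gbox_def by (auto simp: le_floor_iff image_iff)

lemma inj_on_Complex_of_int: "inj_on (\<lambda>(a::int, b::int). Complex (of_int a) (of_int b)) S"
  by (auto simp: inj_on_def)

lemma finite_gbox [simp]: "finite (gbox X)"
  unfolding gbox_eq by simp

lemma card_gbox: "card (gbox X) = (nat \<lfloor>X\<rfloor>)\<^sup>2"
  unfolding gbox_eq
  by (simp add: card_image[OF inj_on_Complex_of_int] card_cartesian_product power2_eq_square)

lemma card_gbox_ge:
  assumes "1 \<le> X"
  shows "X\<^sup>2 / 4 \<le> real (card (gbox X))"
proof -
  have "1 \<le> \<lfloor>X\<rfloor>"
    using assms by simp
  then have "X / 2 \<le> of_int \<lfloor>X\<rfloor>"
    using real_of_int_floor_gt_diff_one[of X] by linarith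
  then have "(X / 2)\<^sup>2 \<le> (of_int \<lfloor>X\<rfloor>)\<^sup>2"
    using assms by (intro power_mono) auto
  then show ?thesis
    using assms by (simp add: card_gbox power_divide)
qed

lemma one_in_gbox: "1 \<le> X \<Longrightarrow> Complex 1 1 \<in> gbox X"
  unfolding gbox_def by (auto intro!: exI[of _ 1])

lemma gauss_int_gbox: "z \<in> gbox X \<Longrightarrow> gauss_int z"
  unfolding gbox_def gauss_int_def by auto

lemma norm_le_gbox: "z \<in> gbox X \<Longrightarrow> norm z \<le> 2 * X"
  unfolding gbox_def using cmod_le[of z] by auto

lemma square_minus_shrunk_le:
  fixes N :: nat and a b :: int
  shows "real N ^ 2 - real (nat (int N - \<bar>a\<bar>)) * real (nat (int N - \<bar>b\<bar>)) \<le> real N * (\<bar>a\<bar> + \<bar>b\<bar>)"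
proof (cases "\<bar>a\<bar> \<le> int N \<and> \<bar>b\<bar> \<le> int N")
  case True
  then show ?thesis
    by (simp add: algebra_simps power2_eq_square)
next
  case False
  then have "real N \<le> \<bar>a\<bar> + \<bar>b\<bar>"
    by auto
  then have "real N * real N \<le> real N * (\<bar>a\<bar> + \<bar>b\<bar>)"
    by (rule mult_left_mono) simp
  then show ?thesis
    using False by (auto simp: power2_eq_square)
qed

lemma card_gbox_not_translate_le:
  fixes N :: nat and t :: complex
  assumes "gauss_int t"
  shows "real (card {n \<in> gbox (real N). n - t \<notin> gbox (real N)}) \<le> real N * (\<bar>Re t\<bar> + \<bar>Im t\<bar>)"
proof -
  obtain a b :: int where t: "t = Complex a b"
    using gauss_intE[OF assms] by blast
  let ?X = "gbox (real N)"
  let ?T = "{n \<in> ?X. n - t \<in> ?X}"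
  let ?I = "\<lambda>c::int. {max 1 (1 + c) .. min (int N) (int N + c)}"
  have card_I: "card (?I c) = nat (int N - \<bar>c\<bar>)" for c
    by (cases "c \<ge> 0") (auto simp: max_def min_def)
  have "(\<lambda>(i, j). Complex (of_int i) (of_int j)) ` (?I a \<times> ?I b) \<subseteq> ?T"
  proof
    fix z assume "z \<in> (\<lambda>(i, j). Complex (of_int i) (of_int j)) ` (?I a \<times> ?I b)"
    then obtain i j where z: "z = Complex (of_int i) (of_int j)" "i \<in> ?I a" "j \<in> ?I b"
      by auto
    moreover have "Complex (of_int i) (of_int j) - t = Complex (of_int (i - a)) (of_int (j - b))"
      by (simp add: t complex_eq_iff)
    ultimately show "z \<in> ?T"
      unfolding gbox_def by fastforce
  qed
  then have "card ((\<lambda>(i, j). Complex (of_int i) (of_int j)) ` (?I a \<times> ?I b)) \<le> card ?T"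
    by (intro card_mono) auto
  then have "card (?I a) * card (?I b) \<le> card ?T"
    by (simp only: card_image[OF inj_on_Complex_of_int] card_cartesian_product)
  then have inner: "real (nat (int N - \<bar>a\<bar>)) * real (nat (int N - \<bar>b\<bar>)) \<le> real (card ?T)"
    unfolding card_I by (metis of_nat_mono of_nat_mult)
  have "{n \<in> ?X. n - t \<notin> ?X} = ?X - ?T"
    by auto
  moreover have "card ?T \<le> card ?X"
    by (rule card_mono) auto
  ultimately have "real (card {n \<in> ?X. n - t \<notin> ?X}) = real N ^ 2 - real (card ?T)"
    by (simp add: card_Diff_subset card_gbox)
  moreover have "real N ^ 2 - real (nat (int N - \<bar>a\<bar>)) * real (nat (int N - \<bar>b\<bar>)) \<le> real N * (\<bar>a\<bar> + \<bar>b\<bar>)"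
    by (rule square_minus_shrunk_le)
  ultimately show ?thesis
    using inner t by simp
qed

lemma avg_translate_gbox_le:
  fixes N :: nat and F :: "complex \<Rightarrow> real"
  assumes "gauss_int t"
    and supp: "\<And>z. z \<notin> gbox (real N) \<Longrightarrow> F z = 0"
    and bound: "\<And>z. \<bar>F z\<bar> \<le> 1"
  shows "\<bar>avg (gbox (real N)) (\<lambda>n. F (n + t)) - avg (gbox (real N)) F\<bar> \<le> 2 * norm t / real N"
proof -
  let ?X = "gbox (real N)"
  let ?T = "{n \<in> ?X. n - t \<in> ?X}"
  let ?E = "{n \<in> ?X. n - t \<notin> ?X}"
  have "(\<Sum>n\<in>?X. F (n + t)) = (\<Sum>n\<in>{n \<in> ?X. n + t \<in> ?X}. F (n + t))"
    by (rule sum.mono_neutral_right) (auto simp: supp)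
  also have "\<dots> = (\<Sum>n\<in>?T. F n)"
    by (rule sum.reindex_bij_witness[where i="\<lambda>n. n - t" and j="\<lambda>n. n + t"]) auto
  moreover have "(\<Sum>n\<in>?X. F n) = (\<Sum>n\<in>?T. F n) + (\<Sum>n\<in>?E. F n)"
    by (subst sum.union_disjoint[symmetric]) (auto intro: sum.cong)
  ultimately have "\<bar>(\<Sum>n\<in>?X. F (n + t)) - (\<Sum>n\<in>?X. F n)\<bar> = \<bar>\<Sum>n\<in>?E. F n\<bar>"
    by simp
  also have "\<dots> \<le> (\<Sum>n\<in>?E. 1)"
    by (rule order_trans[OF sum_abs sum_mono]) (rule bound)
  also have "\<dots> = real (card ?E)"
    by simp
  also have "\<dots> \<le> real N * (\<bar>Re t\<bar> + \<bar>Im t\<bar>)"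
    by (rule card_gbox_not_translate_le[OF assms(1)])
  also have "\<dots> \<le> real N * (2 * norm t)"
    using abs_Re_le_cmod[of t] abs_Im_le_cmod[of t] by (intro mult_left_mono) auto
  finally have diff: "\<bar>(\<Sum>n\<in>?X. F (n + t)) - (\<Sum>n\<in>?X. F n)\<bar> / real N ^ 2 \<le> real N * (2 * norm t) / real N ^ 2"
    by (rule divide_right_mono) simp
  have "avg ?X (\<lambda>n. F (n + t)) - avg ?X F = ((\<Sum>n\<in>?X. F (n + t)) - (\<Sum>n\<in>?X. F n)) / real N ^ 2"
    by (simp add: avg_def card_gbox diff_divide_distrib)
  then show ?thesis
    using diff by (cases "N = 0") (simp_all add: power2_eq_square)
qed

lemma gtuples_0: "gtuples 0 Y = {[]}"
  by (auto simp: gtuples_def)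

lemma gtuples_Suc: "gtuples (Suc j) Y = (\<lambda>(h, hs). h # hs) ` (gbox Y \<times> gtuples j Y)"
  unfolding gtuples_def by (auto simp: image_iff length_Suc_conv)

lemma finite_gtuples [simp]: "finite (gtuples j Y)"
  by (induction j) (simp_all add: gtuples_0 gtuples_Suc)

lemma replicate_in_gtuples: "h \<in> gbox Y \<Longrightarrow> replicate j h \<in> gtuples j Y"
  by (auto simp: gtuples_def)

lemma avg_gtuples_Suc:
  "avg (gtuples (Suc j) Y) F = avg (gtuples j Y) (\<lambda>hs. avg (gbox Y) (\<lambda>h. F (h # hs)))"
proof -
  have "inj_on (\<lambda>(h, hs). h # hs) (gbox Y \<times> gtuples j Y)"
    by (auto simp: inj_on_def)
  then have "avg (gtuples (Suc j) Y) F = avg (gbox Y \<times> gtuples j Y) (\<lambda>(h, hs). F (h # hs))"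
    unfolding gtuples_Suc by (simp add: avg_reindex case_prod_unfold)
  also have "\<dots> = avg (gbox Y) (\<lambda>h. avg (gtuples j Y) (\<lambda>hs. F (h # hs)))"
    by (rule avg_cartesian)
  also have "\<dots> = avg (gtuples j Y) (\<lambda>hs. avg (gbox Y) (\<lambda>h. F (h # hs)))"
    by (rule avg_swap)
  finally show ?thesis .
qed

lemma norm_sum_list_le: "set hs \<subseteq> gbox Y \<Longrightarrow> norm (sum_list hs) \<le> real (length hs) * (2 * Y)"
proof (induction hs)
  case (Cons h hs)
  then show ?case
    using norm_triangle_ineq[of h "sum_list hs"] norm_le_gbox[of h Y] by (simp add: algebra_simps)
qed simp

section \<open>The balanced function\<close>

lemma density_le_1: "A \<subseteq> gbox (real N) \<Longrightarrow> density A N \<le> 1"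
  using card_mono[of "gbox (real N)" A] by (cases "N = 0") (auto simp: density_def card_gbox)

lemma balanced_eq_0: "A \<subseteq> gbox (real N) \<Longrightarrow> z \<notin> gbox (real N) \<Longrightarrow> balanced A N z = 0"
  unfolding balanced_def by (auto simp: indicator_def)

lemma abs_balanced_le_1: "A \<subseteq> gbox (real N) \<Longrightarrow> \<bar>balanced A N z\<bar> \<le> 1"
  using density_le_1[of A N] unfolding balanced_def density_def
  by (auto simp: indicator_def)

lemma avg_balanced_square_le:
  assumes "A \<subseteq> gbox (real N)"
  shows "avg (gbox (real N)) (\<lambda>n. (balanced A N n)\<^sup>2) \<le> density A N"
proof -
  let ?X = "gbox (real N)" and ?\<delta> = "density A N"
  have "(\<Sum>n\<in>?X. (balanced A N n)\<^sup>2) = (\<Sum>n\<in>?X. (1 - 2 * ?\<delta>) * indicator A n + ?\<delta>\<^sup>2)"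
    using assms by (intro sum.cong) (auto simp: balanced_def indicator_def power2_eq_square algebra_simps)
  also have "\<dots> = (1 - 2 * ?\<delta>) * card A + ?\<delta>\<^sup>2 * card ?X"
  proof -
    have "(\<Sum>n\<in>?X. indicator A n :: real) = (\<Sum>n\<in>?X \<inter> A. 1)"
      using sum.inter_restrict[of ?X "\<lambda>_. 1::real" A] by (simp add: indicator_def of_bool_def)
    then show ?thesis
      using assms by (simp add: sum.distrib Int_absorb1 flip: sum_distrib_left)
  qed
  finally have "avg ?X (\<lambda>n. (balanced A N n)\<^sup>2) = ?\<delta> - ?\<delta>\<^sup>2"
    by (cases "N = 0") (simp_all add: avg_def density_def card_gbox field_simps power2_eq_square)
  then show ?thesis
    by simp
qed

lemma avg_balanced_translate_le:
  fixes A :: "complex set" and N :: nat and s t :: complex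
  defines "f \<equiv> balanced A N" and "X \<equiv> gbox (real N)"
  assumes "A \<subseteq> gbox (real N)" "gauss_int s"
  shows "avg X (\<lambda>n. f (n + s) * f (n + t)) \<le> avg X (\<lambda>n. f n * f (n + (t - s))) + 2 * norm s / real N"
proof -
  define F where "F m = f m * f (m + (t - s))" for m
  have "\<bar>F m\<bar> \<le> 1" for m
    unfolding F_def f_def abs_mult using abs_balanced_le_1[OF assms(3)] by (intro mult_le_one) auto
  then have "\<bar>avg X (\<lambda>n. F (n + s)) - avg X F\<bar> \<le> 2 * norm s / real N"
    unfolding X_def using balanced_eq_0[OF assms(3)] assms(4)
    by (intro avg_translate_gbox_le) (auto simp: F_def f_def)
  then have "avg X (\<lambda>n. F (n + s)) \<le> avg X F + 2 * norm s / real N"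
    by linarith
  then show ?thesis
    by (simp add: F_def[abs_def] algebra_simps)
qed

section \<open>Polynomial coefficients and differences\<close>

lemma Mp_nonneg: "0 \<le> Mp p"
  unfolding Mp_def by (auto intro: order_trans[OF _ Max_ge[where x="norm (coeff p 0)"]])

lemma norm_coeff_le_Mp: "norm (coeff p i) \<le> Mp p / 2"
proof (cases "i \<le> degree p")
  case True
  then show ?thesis
    unfolding Mp_def by (auto intro: Max_ge)
next
  case False
  then show ?thesis
    using Mp_nonneg[of p] by (simp add: coeff_eq_0)
qed

lemma Mp_le: "(\<And>i. norm (coeff p i) \<le> c) \<Longrightarrow> Mp p \<le> 2 * c"
  unfolding Mp_def by simp

lemma Mp_ge_norm_lead_coeff: "2 * norm (lead_coeff p) \<le> Mp p"
  unfolding Mp_def by simp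

lemma Mp_pos:
  assumes "p \<noteq> 0"
  shows "0 < Mp p"
proof -
  have "0 < norm (lead_coeff p)"
    using assms by simp
  then show ?thesis
    using Mp_ge_norm_lead_coeff[of p] by linarith
qed

lemma Mp_ge_2: "gauss_poly p \<Longrightarrow> p \<noteq> 0 \<Longrightarrow> 2 \<le> Mp p"
  using Mp_ge_norm_lead_coeff[of p] gauss_int_norm_ge_1[of "lead_coeff p"]
  by (simp add: gauss_poly_def)

lemma norm_poly_le: "norm (poly p z) \<le> real (degree p + 1) * (Mp p / 2) * (max 1 (norm z)) ^ degree p"
proof -
  have "norm (poly p z) \<le> (\<Sum>i\<le>degree p. norm (coeff p i * z ^ i))"
    unfolding poly_altdef by (rule norm_sum)
  also have "\<dots> \<le> (\<Sum>i\<le>degree p. (Mp p / 2) * (max 1 (norm z)) ^ degree p)"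
  proof (rule sum_mono)
    fix i assume "i \<in> {..degree p}"
    then have "norm (z ^ i) \<le> (max 1 (norm z)) ^ degree p"
      unfolding norm_power by (intro order_trans[OF power_mono power_increasing]) auto
    then show "norm (coeff p i * z ^ i) \<le> (Mp p / 2) * (max 1 (norm z)) ^ degree p"
      unfolding norm_mult by (intro mult_mono norm_coeff_le_Mp) (auto simp: Mp_nonneg)
  qed
  finally show ?thesis
    by simp
qed

lemma norm_poly_sigma_le:
  assumes "x \<in> gbox (2 * L)" "hs \<in> gtuples j H" "h \<in> gbox H"
    and "1 \<le> H" "H \<le> L" "degree p \<le> d" "j + 2 \<le> d"
  shows "norm (poly p (sigma x hs + h)) \<le> real (d + 1) * (Mp p / 2) * (real (2 * d + 2) * L) ^ d"
proof -
  have "norm (sigma x hs + h) \<le> norm x + norm (sum_list hs) + norm h"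
    unfolding sigma_def by (metis norm_triangle_ineq order_trans add_right_mono)
  also have "\<dots> \<le> 2 * (2 * L) + real j * (2 * L) + 2 * L"
  proof (intro add_mono)
    show "norm x \<le> 2 * (2 * L)"
      using norm_le_gbox[OF assms(1)] .
    have "norm (sum_list hs) \<le> real j * (2 * H)"
      using norm_sum_list_le[of hs H] assms(2) by (simp add: gtuples_def)
    then show "norm (sum_list hs) \<le> real j * (2 * L)"
      using assms(5) by (smt (verit) mult_left_mono of_nat_0_le_iff)
    show "norm h \<le> 2 * L"
      using norm_le_gbox[OF assms(3)] assms(5) by simp
  qed
  also have "\<dots> = real (2 * j + 6) * L"
    by (simp add: algebra_simps)
  also have "\<dots> \<le> real (2 * d + 2) * L"
    using assms(4,5,7) by (intro mult_right_mono) auto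
  finally have "max 1 (norm (sigma x hs + h)) \<le> real (2 * d + 2) * L"
    using assms(4,5) by (simp add: order_trans[OF _ mult_mono[of 1 _ 1]])
  then have "max 1 (norm (sigma x hs + h)) ^ degree p \<le> (real (2 * d + 2) * L) ^ d"
    using assms(4,5,6) by (intro order_trans[OF power_mono power_increasing]) auto
  then show ?thesis
    using norm_poly_le[of p "sigma x hs + h"] assms(6) Mp_nonneg[of p]
    by (elim order_trans) (intro mult_mono; simp)
qed

lemma coeff_pcompose_shift:
  fixes p :: "'a::{comm_ring_1,ring_no_zero_divisors,ring_char_0} poly"
  shows "coeff (pcompose p [:k, 1:]) i = (\<Sum>j\<le>degree p. coeff p j * of_nat (j choose i) * k ^ (j - i))"
proof -
  define c where "c i = (\<Sum>j\<le>degree p. coeff p j * of_nat (j choose i) * k ^ (j - i))" for i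
  have binomial: "(y + k) ^ j = (\<Sum>i\<le>degree p. of_nat (j choose i) * y ^ i * k ^ (j - i))"
    if "j \<le> degree p" for y j
    unfolding binomial_ring using that by (intro sum.mono_neutral_left) (auto simp: binomial_eq_0)
  have "poly (\<Sum>i\<le>degree p. monom (c i) i) y = poly (pcompose p [:k, 1:]) y" for y
  proof -
    have "poly (\<Sum>i\<le>degree p. monom (c i) i) y
        = (\<Sum>i\<le>degree p. \<Sum>j\<le>degree p. coeff p j * (of_nat (j choose i) * y ^ i * k ^ (j - i)))"
      by (simp add: c_def poly_sum poly_monom sum_distrib_left sum_distrib_right mult_ac)
    also have "\<dots> = (\<Sum>j\<le>degree p. coeff p j * (\<Sum>i\<le>degree p. of_nat (j choose i) * y ^ i * k ^ (j - i)))"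
      by (subst sum.swap) (simp only: sum_distrib_left)
    also have "\<dots> = poly p (y + k)"
      unfolding poly_altdef by (intro sum.cong refl) (simp add: binomial)
    finally show ?thesis
      by (simp add: poly_pcompose add.commute)
  qed
  then have "poly (\<Sum>i\<le>degree p. monom (c i) i) = poly (pcompose p [:k, 1:])"
    by (rule ext)
  then have "pcompose p [:k, 1:] = (\<Sum>i\<le>degree p. monom (c i) i)"
    by (simp add: poly_eq_poly_eq_iff)
  moreover have "coeff (\<Sum>l\<le>degree p. monom (c l) l) i = c i"
  proof (cases "i \<le> degree p")
    case True
    then show ?thesis
      by (rule coeff_sum_monom)
  next
    case False
    then have "c i = 0"
      unfolding c_def by (intro sum.neutral) (auto simp: binomial_eq_0)
    with False show ?thesis
      by (simp add: coeff_sum)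
  qed
  ultimately show ?thesis
    by (simp add: c_def)
qed

lemma coeff_pcompose_shift_diff:
  fixes p :: "'a::{comm_ring_1,ring_no_zero_divisors,ring_char_0} poly"
  shows "coeff (pcompose p [:k, 1:] - pcompose p [:h, 1:]) i
    = (\<Sum>j\<le>degree p. coeff p j * of_nat (j choose i) * (k ^ (j - i) - h ^ (j - i)))"
  by (simp add: coeff_pcompose_shift algebra_simps flip: sum_subtractf)

lemma degree_pcompose_shift_diff:
  fixes p :: "'a::{idom,ring_char_0} poly"
  assumes "degree p \<noteq> 0" "h \<noteq> k"
  shows "degree (pcompose p [:k, 1:] - pcompose p [:h, 1:]) = degree p - 1"
proof (rule antisym)
  show "degree (pcompose p [:k, 1:] - pcompose p [:h, 1:]) \<le> degree p - 1"
  proof (rule degree_le, intro allI impI)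
    fix i assume "degree p - 1 < i"
    then have "j < i \<or> j - i = 0" if "j \<le> degree p" for j
      using that by linarith
    then show "coeff (pcompose p [:k, 1:] - pcompose p [:h, 1:]) i = 0"
      unfolding coeff_pcompose_shift_diff by (intro sum.neutral) (fastforce simp: binomial_eq_0)
  qed
  let ?D = "degree p"
  have "coeff (pcompose p [:k, 1:] - pcompose p [:h, 1:]) (?D - 1)
      = (\<Sum>j\<in>{?D}. coeff p j * of_nat (j choose (?D - 1)) * (k ^ (j - (?D - 1)) - h ^ (j - (?D - 1))))"
    unfolding coeff_pcompose_shift_diff
  proof (rule sum.mono_neutral_right)
    show "\<forall>j\<in>{..?D} - {?D}. coeff p j * of_nat (j choose (?D - 1)) * (k ^ (j - (?D - 1)) - h ^ (j - (?D - 1))) = 0"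
      using assms(1) by (auto simp: binomial_eq_0 le_Suc_eq dest!: le_neq_implies_less)
  qed auto
  also have "\<dots> = lead_coeff p * of_nat ?D * (k - h)"
    using assms(1) binomial_symmetric[of 1 ?D] by simp
  finally have "coeff (pcompose p [:k, 1:] - pcompose p [:h, 1:]) (?D - 1) \<noteq> 0"
    using assms by auto
  then show "?D - 1 \<le> degree (pcompose p [:k, 1:] - pcompose p [:h, 1:])"
    by (rule le_degree)
qed

lemma gauss_poly_pcompose_shift_diff:
  assumes "gauss_poly p" "gauss_int h" "gauss_int k"
  shows "gauss_poly (pcompose p [:k, 1:] - pcompose p [:h, 1:])"
  using assms unfolding gauss_poly_def coeff_pcompose_shift_diff by auto

lemma choose_mult_power2_le: "(j choose i) * 2 ^ (j - i) \<le> (3::nat) ^ j"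
proof (cases "i \<le> j")
  case True
  have "(3::nat) ^ j = (1 + 2) ^ j"
    by (simp add: numeral_3_eq_3)
  also have "\<dots> = (\<Sum>l\<le>j. (j choose l) * 2 ^ (j - l))"
    by (simp only: binomial_ring) simp
  also have "(j choose i) * 2 ^ (j - i) \<le> \<dots>"
    using True by (intro member_le_sum) auto
  finally show ?thesis .
qed (simp add: binomial_eq_0)

lemma sum_power3_le: "(\<Sum>j\<le>n. (3::nat) ^ j) \<le> 4 ^ n"
proof (induction n)
  case (Suc n)
  have "(3::nat) ^ Suc n \<le> 3 * 4 ^ n"
    using power_mono[of "3::nat" 4 n] by simp
  then show ?case
    using Suc by simp
qed simp

lemma choose_mult_norm_power_le:
  fixes k :: complex
  assumes "norm k \<le> 2 * H" "1 \<le> H" "j \<le> n"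
  shows "real (j choose i) * norm (k ^ (j - i)) \<le> 3 ^ j * H ^ n"
proof -
  have "norm (k ^ (j - i)) \<le> (2 * H) ^ (j - i)"
    unfolding norm_power by (rule power_mono) (use assms in auto)
  also have "\<dots> \<le> 2 ^ (j - i) * H ^ n"
    unfolding power_mult_distrib using assms(2,3) by (intro mult_left_mono power_increasing) auto
  finally have "real (j choose i) * norm (k ^ (j - i)) \<le> real ((j choose i) * 2 ^ (j - i)) * H ^ n"
    using mult_left_mono[of _ _ "real (j choose i)"] by (simp add: mult.assoc)
  also have "\<dots> \<le> 3 ^ j * H ^ n"
    using of_nat_mono[OF choose_mult_power2_le[of j i], where 'a=real] assms(2)
    by (intro mult_right_mono) simp_all
  finally show ?thesis .
qed

lemma norm_coeff_pcompose_shift_le: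
  fixes p :: "complex poly"
  assumes "norm k \<le> 2 * H" "1 \<le> H"
  shows "norm (coeff (pcompose p [:k, 1:]) i) \<le> Mp p / 2 * H ^ degree p * 4 ^ degree p"
proof -
  have "norm (coeff (pcompose p [:k, 1:]) i)
      \<le> (\<Sum>j\<le>degree p. norm (coeff p j * of_nat (j choose i) * k ^ (j - i)))"
    unfolding coeff_pcompose_shift by (rule norm_sum)
  also have "\<dots> \<le> (\<Sum>j\<le>degree p. Mp p / 2 * H ^ degree p * 3 ^ j)"
  proof (rule sum_mono)
    fix j assume "j \<in> {..degree p}"
    then have bound: "real (j choose i) * norm (k ^ (j - i)) \<le> 3 ^ j * H ^ degree p"
      using assms by (intro choose_mult_norm_power_le) auto
    show "norm (coeff p j * of_nat (j choose i) * k ^ (j - i)) \<le> Mp p / 2 * H ^ degree p * 3 ^ j"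
      using mult_mono[OF norm_coeff_le_Mp bound] Mp_nonneg[of p] by (simp add: norm_mult mult_ac)
  qed
  also have "\<dots> = Mp p / 2 * H ^ degree p * real (\<Sum>j\<le>degree p. (3::nat) ^ j)"
    by (simp add: sum_distrib_left)
  also have "\<dots> \<le> Mp p / 2 * H ^ degree p * 4 ^ degree p"
    using of_nat_mono[OF sum_power3_le[of "degree p"], where 'a=real] Mp_nonneg[of p] assms(2)
    by (intro mult_left_mono) simp_all
  finally show ?thesis .
qed

lemma Mp_pcompose_shift_diff_le:
  fixes p :: "complex poly"
  assumes "norm h \<le> 2 * H" "norm k \<le> 2 * H" "1 \<le> H" "degree p \<le> d"
  shows "Mp (pcompose p [:k, 1:] - pcompose p [:h, 1:]) \<le> 2 ^ (2 * d + 1) * Mp p * H ^ d"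
proof -
  have "norm (coeff (pcompose p [:k, 1:] - pcompose p [:h, 1:]) i) \<le> Mp p * H ^ degree p * 4 ^ degree p" for i
    using norm_triangle_ineq4[of "coeff (pcompose p [:k, 1:]) i" "coeff (pcompose p [:h, 1:]) i"]
      norm_coeff_pcompose_shift_le[OF assms(1,3), of p i] norm_coeff_pcompose_shift_le[OF assms(2,3), of p i]
    by simp
  then have "Mp (pcompose p [:k, 1:] - pcompose p [:h, 1:]) \<le> 2 * (Mp p * H ^ degree p * 4 ^ degree p)"
    by (rule Mp_le)
  also have "\<dots> \<le> 2 * (Mp p * H ^ d * 4 ^ d)"
    using assms(3,4) Mp_nonneg[of p] by (intro mult_left_mono mult_mono power_increasing) auto
  also have "\<dots> = 2 ^ (2 * d + 1) * Mp p * H ^ d"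
    by (simp add: power_mult power_add)
  finally show ?thesis .
qed

section \<open>The differencing step\<close>

lemma differencing_gain_arith:
  fixes a :: nat and \<delta> \<delta>0 e c :: real
  assumes "1 \<le> a" "0 < \<delta>0" "\<delta>0 \<le> \<delta>"
    and e: "e \<le> \<delta>0 ^ (2 * a + 1) / 2 ^ (6 * a + 1)"
    and c: "c \<le> 4 * \<delta>0 ^ (2 * a + 1) / 2 ^ (6 * a - 1)"
  shows "\<delta> ^ (2 * a + 1) / 2 ^ (6 * a - 2) \<le> (\<delta> ^ (a + 1) / 2 ^ (3 * a - 2))\<^sup>2 / \<delta> - e - c"
proof -
  obtain b where a: "a = Suc b"
    using assms(1) by (cases a) auto
  define q :: real where "q = 2 ^ (6 * b + 2)"
  define x where "x = \<delta> ^ (2 * a + 1) / q"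
  have "0 < q"
    by (simp add: q_def)
  define y where "y = \<delta>0 ^ (2 * a + 1) / q"
  have "\<delta>0 ^ (2 * a + 1) \<le> \<delta> ^ (2 * a + 1)"
    using assms(2,3) by (intro power_mono) auto
  then have "y \<le> x"
    using \<open>0 < q\<close> by (simp add: x_def y_def divide_right_mono)
  moreover have "e \<le> y / 32" "c \<le> y / 2"
    using e c by (simp_all add: a y_def q_def power_add field_simps)
  moreover have "(\<delta> ^ (a + 1) / 2 ^ (3 * a - 2))\<^sup>2 / \<delta> = x"
    using assms(2,3) by (simp add: a x_def q_def power2_eq_square power_add power_mult field_simps)
  moreover have "\<delta> ^ (2 * a + 1) / 2 ^ (6 * a - 2) = x / 4"
    by (simp add: a x_def q_def power_add)
  moreover have "0 \<le> x"
    using assms(2,3) \<open>0 < q\<close> by (simp add: x_def)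
  ultimately show ?thesis
    by linarith
qed

lemma inverse_card_gbox_le:
  fixes N n :: nat and Z :: real
  assumes "0 < n" "1 \<le> Z" "Z ^ (4 * n) \<le> real N"
  shows "1 / real (card (gbox (real N powr (1 / (8 * real n))))) \<le> 4 / Z"
proof -
  let ?H = "real N powr (1 / (8 * real n))"
  have "1 \<le> real N"
    using assms(2,3) one_le_power[of Z "4 * n"] by linarith
  have "Z = (Z ^ (4 * n)) powr (1 / real (4 * n))"
    using assms(1,2) by (simp add: powr_realpow[symmetric] powr_powr)
  also have "\<dots> \<le> real N powr (1 / real (4 * n))"
    using assms(2,3) by (intro powr_mono2) auto
  also have "\<dots> = ?H\<^sup>2"
    by (simp add: power2_eq_square flip: powr_add)
  finally have "Z / 4 \<le> real (card (gbox ?H))"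
    using card_gbox_ge[of ?H] \<open>1 \<le> real N\<close> by (simp add: ge_one_powr_ge_zero)
  then show ?thesis
    using assms(2) by (simp add: field_simps)
qed

lemma translation_error_le:
  fixes d N :: nat and K M w :: real
  assumes "2 \<le> M" "0 < w" "0 < K"
    and N: "(K * real (2 * d + 2) ^ (2 * d + 2) * M\<^sup>2 / w)\<^sup>2 \<le> real N"
  shows "real (d + 1) * M * real (2 * d + 2) ^ d * sqrt (real N) / real N \<le> w / (2 * K)"
proof -
  define Z where "Z = real (2 * d + 2) ^ (2 * d + 2)"
  define Q where "Q = K * Z * M\<^sup>2 / w"
  have "0 < Z"
    by (simp add: Z_def)
  have "0 < Q"
    using assms \<open>0 < Z\<close> by (simp add: Q_def)
  have "Q \<le> sqrt (real N)"
    using N \<open>0 < Q\<close> by (simp add: Q_def Z_def real_le_rsqrt)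
  have "real (d + 1) \<le> real (2 * d + 2)"
    by simp
  also have "\<dots> \<le> real (2 * d + 2) ^ (d + 2)"
    by (rule self_le_power) simp_all
  finally have d1: "real (d + 1) \<le> real (2 * d + 2) ^ (d + 2)" .
  have "2 * d + 2 = (d + 2) + d"
    by simp
  then have "Z = real (2 * d + 2) ^ (d + 2) * real (2 * d + 2) ^ d"
    unfolding Z_def by (simp only: power_add)
  then have dZ: "real (d + 1) * real (2 * d + 2) ^ d \<le> Z"
    using mult_right_mono[OF d1, of "real (2 * d + 2) ^ d"] by simp
  have "real (d + 1) * M * real (2 * d + 2) ^ d * sqrt (real N) / real N
      = real (d + 1) * real (2 * d + 2) ^ d * M / sqrt (real N)"
    using sqrt_divide_self_eq[of "real N"] by (simp add: divide_inverse mult_ac)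
  also have "\<dots> \<le> Z * M / Q"
  proof (rule frac_le)
    show "real (d + 1) * real (2 * d + 2) ^ d * M \<le> Z * M"
      using dZ assms(1) by (intro mult_right_mono) auto
  qed (use \<open>0 < Q\<close> \<open>Q \<le> sqrt (real N)\<close> \<open>0 < Z\<close> assms(1) in auto)
  also have "\<dots> = w / (K * M)"
    using assms \<open>0 < Z\<close> by (simp add: Q_def field_simps power2_eq_square)
  also have "\<dots> \<le> w / (2 * K)"
  proof (rule divide_left_mono)
    show "2 * K \<le> K * M"
      using mult_left_mono[OF assms(1), of K] assms(3) by linarith
  qed (use assms in auto)
  finally show ?thesis .
qed

lemma differencing_gain_ge:
  fixes a d r N :: nat and \<delta>0 \<delta> M :: real
  assumes "1 \<le> a" "0 < d" "0 < \<delta>0" "\<delta>0 < 1" "\<delta>0 \<le> \<delta>" "2 \<le> M"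
    and N1: "(2 ^ (6 * a - 1) / \<delta>0 ^ (2 * a + 1)) ^ (4 * d ^ r) \<le> real N"
    and N2: "((2 ^ (6 * a) * real (2 * d + 2) ^ (2 * d + 2) * M\<^sup>2) / \<delta>0 ^ (2 * a + 1))\<^sup>2 \<le> real N"
  shows "\<delta> ^ (2 * a + 1) / 2 ^ (6 * a - 2) \<le> (\<delta> ^ (a + 1) / 2 ^ (3 * a - 2))\<^sup>2 / \<delta>
    - real (d + 1) * M * real (2 * d + 2) ^ d * sqrt (real N) / real N
    - 1 / card (gbox (real N powr (1 / (8 * real d ^ r))))"
proof (rule differencing_gain_arith[OF assms(1,3,5)])
  define w where "w = \<delta>0 ^ (2 * a + 1)"
  have "0 < w" "w \<le> 1"
    unfolding w_def using assms(3,4) by (simp, intro power_le_one) auto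
  show "real (d + 1) * M * real (2 * d + 2) ^ d * sqrt (real N) / real N \<le> w / 2 ^ (6 * a + 1)"
    using translation_error_le[OF assms(6) \<open>0 < w\<close> _ N2[folded w_def]] by simp
  have "w \<le> 2 ^ (6 * a - 1)"
    using \<open>w \<le> 1\<close> one_le_power[of "2::real" "6 * a - 1"] by linarith
  then have "1 \<le> 2 ^ (6 * a - 1) / w"
    using \<open>0 < w\<close> by simp
  then have "1 / card (gbox (real N powr (1 / (8 * real d ^ r)))) \<le> 4 / (2 ^ (6 * a - 1) / w)"
    using inverse_card_gbox_le[of "d ^ r" "2 ^ (6 * a - 1) / w" N] N1[folded w_def] assms(2) by simp
  then show "1 / card (gbox (real N powr (1 / (8 * real d ^ r)))) \<le> 4 * w / 2 ^ (6 * a - 1)"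
    by simp
qed

lemma differencing_scales:
  fixes N d r :: nat
  assumes "0 < N" "0 < d" "0 < r"
  shows "1 \<le> real N powr (1 / (8 * real d ^ r))"
    and "real N powr (1 / (8 * real d ^ r)) \<le> real N powr (1 / (2 * real d))"
    and "(real N powr (1 / (2 * real d))) ^ d = sqrt (real N)"
    and "(real N powr (1 / (8 * real d ^ r))) ^ d = real N powr (1 / (8 * real d ^ (r - 1)))"
proof -
  have "real d \<le> real d ^ r"
    using assms(2,3) by (intro self_le_power) auto
  then have "2 * real d \<le> 8 * real d ^ r"
    by linarith
  then have "1 / (8 * real d ^ r) \<le> 1 / (2 * real d)"
    by (rule divide_left_mono) (use assms(2) in auto)
  then show "1 \<le> real N powr (1 / (8 * real d ^ r))"
    and "real N powr (1 / (8 * real d ^ r)) \<le> real N powr (1 / (2 * real d))"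
    using assms(1) by (auto intro: ge_one_powr_ge_zero powr_mono)
  show "(real N powr (1 / (2 * real d))) ^ d = sqrt (real N)"
    using assms(1,2) by (simp add: powr_power flip: powr_half_sqrt)
  have "real d * (1 / (8 * real d ^ r)) = 1 / (8 * real d ^ (r - 1))"
    using assms(2,3) by (cases r) simp_all
  then show "(real N powr (1 / (8 * real d ^ r))) ^ d = real N powr (1 / (8 * real d ^ (r - 1)))"
    using assms(1) by (simp add: powr_power)
qed

definition poly_correlation :: "complex set \<Rightarrow> nat \<Rightarrow> complex set \<Rightarrow> nat \<Rightarrow> real \<Rightarrow> complex poly \<Rightarrow> real"
  where "poly_correlation A N D j H q = avg (gbox (real N)) (\<lambda>n. avg D (\<lambda>x. avg (gtuples j H)
    (\<lambda>hs. balanced A N n * balanced A N (n + poly q (sigma x hs)))))"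

lemma polynomial_differencing:
  fixes A D :: "complex set" and N j d :: nat and p :: "complex poly" and H L \<epsilon> :: real
  defines "e \<equiv> real (d + 1) * Mp p * real (2 * d + 2) ^ d * L ^ d / real N"
  assumes A: "A \<subseteq> gbox (real N)" "0 < N" "0 < density A N"
    and p: "gauss_poly p" "degree p \<le> d" and j: "1 \<le> j" "j + 1 \<le> d"
    and D: "D \<noteq> {}" "D \<subseteq> gbox (2 * L)" and H: "1 \<le> H" "H \<le> L"
    and corr: "\<epsilon> \<le> \<bar>poly_correlation A N D j H p\<bar>" "0 \<le> \<epsilon>"
    and gain: "0 < \<epsilon>\<^sup>2 / density A N - e - 1 / card (gbox H)"
  obtains h k where "h \<in> gbox H" "k \<in> gbox H" "h \<noteq> k"
    "\<epsilon>\<^sup>2 / density A N - e - 1 / card (gbox H)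
      \<le> poly_correlation A N D (j - 1) H (pcompose p [:k, 1:] - pcompose p [:h, 1:])"
proof -
  obtain i where i: "j = Suc i"
    using j(1) by (cases j) auto
  define f where "f = balanced A N"
  define X where "X = gbox (real N)"
  define U where "U = D \<times> gtuples i H"
  define P where "P u h = poly p (sigma (fst u) (snd u) + h)" for u h
  have "finite D"
    using D(2) by (rule finite_subset) simp
  have fin: "finite X" "X \<noteq> {}" "finite U" "U \<noteq> {}" "finite (gbox H)" "gbox H \<noteq> {}"
    using one_in_gbox[of "real N"] one_in_gbox[OF H(1)] replicate_in_gtuples[OF one_in_gbox[OF H(1)], of i]
      \<open>finite D\<close> D(1) A(2) by (auto simp: X_def U_def)
  have f_bound: "\<bar>f z\<bar> \<le> 1" for z
    unfolding f_def by (rule abs_balanced_le_1[OF A(1)])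
  have energy: "avg X (\<lambda>n. (f n)\<^sup>2) \<le> density A N"
    unfolding X_def f_def by (rule avg_balanced_square_le[OF A(1)])
  have u: "fst u \<in> gbox (2 * L)" "snd u \<in> gtuples i H" if "u \<in> U" for u
    using that D(2) by (auto simp: U_def)
  have shift: "avg X (\<lambda>n. f (n + P u h) * f (n + P u k)) \<le> avg X (\<lambda>n. f n * f (n + (P u k - P u h))) + e"
    if "u \<in> U" "h \<in> gbox H" "k \<in> gbox H" for u h k
  proof -
    have "gauss_int (P u h)"
      using u[OF that(1)] that(2) p(1)
      by (auto simp: P_def sigma_def gtuples_def intro!: gauss_int_poly gauss_int_add gauss_int_sum_list
          dest: gauss_int_gbox)
    moreover have "2 * norm (P u h) / real N \<le> e"
      using norm_poly_sigma_le[OF u[OF that(1)] that(2) H p(2)] i j(2) A(2)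
      by (simp add: P_def e_def divide_right_mono power_mult_distrib)
    ultimately show ?thesis
      using avg_balanced_translate_le[OF A(1), of "P u h" "P u k"] unfolding f_def X_def by linarith
  qed
  have "avg D (\<lambda>x. avg (gtuples j H) (\<lambda>hs. f n * f (n + poly p (sigma x hs))))
      = avg U (\<lambda>u. avg (gbox H) (\<lambda>h. f n * f (n + P u h)))" for n
    using avg_cartesian[of D "gtuples i H" "\<lambda>x hs. avg (gbox H) (\<lambda>h. f n * f (n + P (x, hs) h))"]
    by (simp add: i U_def P_def avg_gtuples_Suc sigma_def add_ac case_prod_unfold)
  then have corr': "\<epsilon> \<le> \<bar>avg X (\<lambda>n. avg U (\<lambda>u. avg (gbox H) (\<lambda>h. f n * f (n + P u h))))\<bar>"
    using corr(1) by (simp add: poly_correlation_def f_def X_def)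
  obtain h k where hk: "h \<in> gbox H" "k \<in> gbox H" "h \<noteq> k"
    "\<epsilon>\<^sup>2 / density A N - e - 1 / card (gbox H) \<le> avg X (\<lambda>n. avg U (\<lambda>u. f n * f (n + (P u k - P u h))))"
    using van_der_Corput_differencing[OF fin f_bound energy A(3) shift corr' corr(2) gain] by blast
  moreover have "avg X (\<lambda>n. avg U (\<lambda>u. f n * f (n + (P u k - P u h))))
      = poly_correlation A N D (j - 1) H (pcompose p [:k, 1:] - pcompose p [:h, 1:])"
    using avg_cartesian[of D "gtuples i H" "\<lambda>x hs. f n * f (n + (P (x, hs) k - P (x, hs) h))" for n]
    by (simp add: poly_correlation_def f_def X_def i U_def P_def poly_pcompose add_ac case_prod_unfold)
  ultimately show ?thesis
    using that by simp
qed

theorem mainTheorem4: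
  fixes d r m N Nm :: nat and \<delta>0 :: real and p :: "complex poly"
    and A D :: "complex set"
  assumes "d \<ge> 2" and "r \<ge> 4" and "0 < \<delta>0" and "\<delta>0 < 1"
    and "1 \<le> m" and "m \<le> d - 1"
    and "gauss_poly p" and "degree p = d - m + 1"
    and "0 < N" and "0 < Nm" and "Nm \<le> N"
    and "A \<subseteq> gbox (real N)" and "density A N \<ge> \<delta>0"
    and "D \<noteq> {}" and "D \<subseteq> gbox (2 * real N powr (1 / (2 * real d)))"
    and "\<bar>avg (gbox (real N)) (\<lambda>n. avg D (\<lambda>x.
            avg (gtuples (d - m) (real N powr (1 / (8 * real d ^ r))))
              (\<lambda>hs. balanced A N n * balanced A N (n + poly p (sigma x hs)))))\<bar>
          \<ge> density A N ^ (2 ^ (m - 1) + 1) / 2 ^ (3 * 2 ^ (m - 1) - 2)"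
    and "N \<ge> Max {Nm,
                   nat \<lceil>(2 ^ (3 * 2 ^ m - 1) / \<delta>0 ^ (2 ^ m + 1)) ^ (4 * d ^ r)\<rceil>,
                   nat \<lceil>((2 ^ (3 * 2 ^ m) * real (2 * d + 2) ^ (2 * d + 2) * (Mp p)\<^sup>2)
                           / \<delta>0 ^ (2 ^ m + 1))\<^sup>2\<rceil>}"
  shows "\<exists>p'. gauss_poly p' \<and> degree p' = d - m \<and> 0 < Mp p' \<and>
           Mp p' \<le> 2 ^ (2 * d + 1) * Mp p * real N powr (1 / (8 * real d ^ (r - 1))) \<and>
           \<bar>avg (gbox (real N)) (\<lambda>n. avg D (\<lambda>x.
              avg (gtuples (d - m - 1) (real N powr (1 / (8 * real d ^ r))))
                (\<lambda>hs. balanced A N n * balanced A N (n + poly p' (sigma x hs)))))\<bar>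
           \<ge> density A N ^ (2 ^ m + 1) / 2 ^ (3 * 2 ^ m - 2)"
proof -
  define a :: nat where "a = 2 ^ (m - 1)"
  define \<delta> where "\<delta> = density A N"
  define \<epsilon> where "\<epsilon> = \<delta> ^ (a + 1) / 2 ^ (3 * a - 2)"
  define H where "H = real N powr (1 / (8 * real d ^ r))"
  define L where "L = real N powr (1 / (2 * real d))"
  define loss where "loss = real (d + 1) * Mp p * real (2 * d + 2) ^ d * L ^ d / real N + 1 / card (gbox H)"
  have a: "1 \<le> a" "2 ^ m = 2 * a" "3 * (2 * a) = 6 * a"
    using assms(5) by (simp_all add: a_def flip: power_Suc)
  have scales: "1 \<le> H" "H \<le> L" "L ^ d = sqrt (real N)" "H ^ d = real N powr (1 / (8 * real d ^ (r - 1)))"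
    unfolding H_def L_def using differencing_scales[of N d r] assms(1,2,9) by simp_all
  have deg: "p \<noteq> 0" "degree p \<le> d" "1 \<le> d - m" "d - m + 1 \<le> d"
    using assms(1,5,6,8) by auto
  have "\<delta> ^ (2 * a + 1) / 2 ^ (6 * a - 2) \<le> \<epsilon>\<^sup>2 / \<delta>
      - real (d + 1) * Mp p * real (2 * d + 2) ^ d * sqrt (real N) / real N - 1 / card (gbox H)"
    unfolding \<epsilon>_def H_def \<delta>_def
    using differencing_gain_ge[OF a(1) _ assms(3,4,13) Mp_ge_2[OF assms(7) deg(1)], of d r N] assms(1,17)
    by (simp add: a)
  then have gain: "\<delta> ^ (2 * a + 1) / 2 ^ (6 * a - 2) \<le> \<epsilon>\<^sup>2 / \<delta> - loss"
    unfolding loss_def scales(3) by simp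
  have "0 < \<delta>" "0 \<le> \<epsilon>"
    using assms(3,13) by (simp_all add: \<delta>_def \<epsilon>_def)
  moreover have "\<epsilon> \<le> \<bar>poly_correlation A N D (d - m) H p\<bar>"
    using assms(16) unfolding poly_correlation_def \<epsilon>_def \<delta>_def H_def a_def .
  moreover have "0 < \<epsilon>\<^sup>2 / \<delta> - loss"
    using gain \<open>0 < \<delta>\<close> by (smt (verit) zero_less_divide_iff zero_less_power)
  ultimately obtain h k where hk: "h \<in> gbox H" "k \<in> gbox H" "h \<noteq> k"
    "\<epsilon>\<^sup>2 / \<delta> - loss \<le> poly_correlation A N D (d - m - 1) H (pcompose p [:k, 1:] - pcompose p [:h, 1:])"
    using polynomial_differencing[OF assms(12,9) _ assms(7) deg(2-4) assms(14) assms(15)[folded L_def] scales(1,2)]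
    unfolding \<delta>_def loss_def diff_diff_eq by blast
  define p' where "p' = pcompose p [:k, 1:] - pcompose p [:h, 1:]"
  show ?thesis
  proof (intro exI[of _ p'] conjI)
    show "gauss_poly p'"
      unfolding p'_def using hk(1,2) by (intro gauss_poly_pcompose_shift_diff assms(7) gauss_int_gbox)
    show "degree p' = d - m"
      using degree_pcompose_shift_diff[of p h k] hk(3) assms(8) by (simp add: p'_def)
    then show "0 < Mp p'"
      using deg(3) by (intro Mp_pos) auto
    show "Mp p' \<le> 2 ^ (2 * d + 1) * Mp p * real N powr (1 / (8 * real d ^ (r - 1)))"
      unfolding p'_def scales(4)[symmetric] using hk(1,2) scales(1) deg(2)
      by (intro Mp_pcompose_shift_diff_le norm_le_gbox) auto
    show "density A N ^ (2 ^ m + 1) / 2 ^ (3 * 2 ^ m - 2) \<le> \<bar>avg (gbox (real N)) (\<lambda>n. avg D (\<lambda>x.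
        avg (gtuples (d - m - 1) (real N powr (1 / (8 * real d ^ r))))
          (\<lambda>hs. balanced A N n * balanced A N (n + poly p' (sigma x hs)))))\<bar>"
      using gain hk(4) unfolding poly_correlation_def a(2,3) p'_def H_def \<delta>_def by linarith
  qed
qed

end
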